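(* Fix a diagram $D\subseteq[n]\times[n]$ and $k,l\in[n]$. Let $\{\widehat{C}^{(i)}\}_{i\in[m]}$ be diagrams with $\widehat{C}^{(i)}\le\widehat{D}$ for each $i$, and write $C^{(i)}=\widehat{C}^{(i)}_{\mathrm{aug}}$. If the polynomials $\Big\{\prod_{j\in[n]}\det\big(Y^{C^{(i)}_j}_{D_j}\big)\Big\}_{i\in[m]}$ are linearly dependent over $\mathbb{C}$, then so are the polynomials $\Big\{\prod_{j\in[n]\setminus\{l\}}\det\big(Y^{\widehat{C}^{(i)}_j}_{\widehat{D}_j}\big)\Big\}_{i\in[m]}$.
   Context: A diagram $D\subseteq[n]\times[n]$ is a set of boxes $(i,j)$ (row $i$, column $j$), identified with its column sequence $(D_1,\dots,D_n)$, $D_j=\{i:(i,j)\in D\}$. For $R,S\subseteq[n]$, $R\le S$ means $\#R=\#S$ and the $k$-th smallest element of $R$ is at most the $k$-th smallest element of $S$ for each $k$; for diagrams $C\le D$ means $C_j\le D_j$ for all $j$. $\widehat{C},\widehat{D}$ denote the diagrams obtained by removing all boxes in row $k$ or column $l$, and $\widehat{C}_{\mathrm{aug}}=\widehat{C}\cup\{(k,i):(k,i)\in D\}\cup\{(i,l):(i,l)\in D\}$. $Y$ is the $n\times n$ upper-triangular matrix with indeterminates $y_{ij}$ ($i\le j$) and zeros below the diagonal; $Y^R_S$ is its submatrix with rows $R$ and columns $S$; the determinant of an empty matrix is $1$. The polynomials live in $\mathbb{C}[y_{ij}: i\le j]$. *)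

theory Defs
  imports "HOL-Library.Poly_Mapping" "Jordan_Normal_Form.Determinant" Complex_Main
begin

text \<open>Polynomials in C[y_ij : i <= j]: finitely supported maps from monomials
(finitely supported exponent vectors on index pairs (i,j)) to complex coefficients.\<close>
type_synonym cpoly = "((nat \<times> nat) \<Rightarrow>\<^sub>0 nat) \<Rightarrow>\<^sub>0 complex"

definition yvar :: "nat \<Rightarrow> nat \<Rightarrow> cpoly" where
  "yvar i j = Poly_Mapping.single (Poly_Mapping.single (i, j) 1) 1"

definition const_poly :: "complex \<Rightarrow> cpoly" where
  "const_poly c = Poly_Mapping.single 0 c"

text \<open>The upper-triangular generic matrix Y (1-based indices).\<close>
definition Yent :: "nat \<Rightarrow> nat \<Rightarrow> cpoly" where
  "Yent i j = (if i \<le> j then yvar i j else 0)"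

text \<open>det(Y^R_S): rows R and columns S taken in increasing order; empty minor has det 1.
  (Only used when #R = #S; set to 0 otherwise.)\<close>
definition minor_det :: "nat set \<Rightarrow> nat set \<Rightarrow> cpoly" where
  "minor_det R S =
    (let rs = sorted_list_of_set R; cs = sorted_list_of_set S
     in if length rs = length cs
        then det (mat (length rs) (length rs) (\<lambda>(a, b). Yent (rs ! a) (cs ! b)))
        else 0)"

definition col :: "(nat \<times> nat) set \<Rightarrow> nat \<Rightarrow> nat set" where
  "col D j = {i. (i, j) \<in> D}"

definition set_le :: "nat set \<Rightarrow> nat set \<Rightarrow> bool" where
  "set_le R S \<longleftrightarrow> card R = card S \<and>
     (\<forall>t < card R. sorted_list_of_set R ! t \<le> sorted_list_of_set S ! t)"

definition diag_le :: "nat \<Rightarrow> (nat \<times> nat) set \<Rightarrow> (nat \<times> nat) set \<Rightarrow> bool" where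
  "diag_le n C D \<longleftrightarrow> (\<forall>j \<in> {1..n}. set_le (col C j) (col D j))"

definition is_diagram :: "nat \<Rightarrow> (nat \<times> nat) set \<Rightarrow> bool" where
  "is_diagram n D \<longleftrightarrow> D \<subseteq> {1..n} \<times> {1..n}"

definition hat :: "nat \<Rightarrow> nat \<Rightarrow> (nat \<times> nat) set \<Rightarrow> (nat \<times> nat) set" where
  "hat k l D = {(i, j) \<in> D. i \<noteq> k \<and> j \<noteq> l}"

definition aug :: "nat \<Rightarrow> nat \<Rightarrow> (nat \<times> nat) set \<Rightarrow> (nat \<times> nat) set \<Rightarrow> (nat \<times> nat) set" where
  "aug k l D Ch = Ch \<union> {(k, i) | i. (k, i) \<in> D} \<union> {(i, l) | i. (i, l) \<in> D}"

definition lin_dep :: "nat \<Rightarrow> (nat \<Rightarrow> cpoly) \<Rightarrow> bool" where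
  "lin_dep m P \<longleftrightarrow> (\<exists>c :: nat \<Rightarrow> complex.
      (\<exists>i \<in> {1..m}. c i \<noteq> 0) \<and> (\<Sum>i = 1..m. const_poly (c i) * P i) = 0)"

end

(*
  Setting y_kc := 0 for all c <> k is a ring homomorphism fixing the scalars, so it
  preserves linear dependence. It turns row k of a minor into zeros except for the
  entry y_kk. Hence in a column j <> l meeting row k, Laplace expansion along row k
  leaves +-y_kk times the minor with row and column k deleted, which is the hatted
  minor; column l is a principal minor of the upper-triangular Y, a product of
  diagonal variables, and is unchanged. So each augmented product becomes +-W times
  the corresponding hatted product with one nonzero W for all i, and W cancels in
  the integral domain of polynomials.
*)
theory Submission
  imports Defs "HOL-Library.Product_Lexorder"
    (* orders monomials linearly, which makes cpoly an integral domain *)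
begin

definition restrict_monomials :: "('a \<Rightarrow> bool) \<Rightarrow> ('a \<Rightarrow>\<^sub>0 'b::zero) \<Rightarrow> 'a \<Rightarrow>\<^sub>0 'b" where
  "restrict_monomials P p = Abs_poly_mapping (\<lambda>m. Poly_Mapping.lookup p m when P m)"

lemma lookup_restrict_monomials:
  "Poly_Mapping.lookup (restrict_monomials P p) m = (Poly_Mapping.lookup p m when P m)"
proof -
  have "finite {m. (Poly_Mapping.lookup p m when P m) \<noteq> 0}"
    by (rule finite_subset[of _ "{m. Poly_Mapping.lookup p m \<noteq> 0}"]) auto
  then show ?thesis
    unfolding restrict_monomials_def by (simp add: lookup_Abs_poly_mapping)
qed

lemma restrict_monomials_mult:
  fixes p q :: "'a::monoid_add \<Rightarrow>\<^sub>0 'b::semiring_0"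
  assumes P_add: "\<And>a b. P (a + b) \<longleftrightarrow> P a \<and> P b"
  shows "restrict_monomials P (p * q) = restrict_monomials P p * restrict_monomials P q"
proof (rule poly_mapping_eqI)
  fix m
  let ?res = "restrict_monomials P"
  have summand: "Poly_Mapping.lookup (?res p) l * (\<Sum>r. Poly_Mapping.lookup (?res q) r when m = l + r)
      = (Poly_Mapping.lookup p l * (\<Sum>r. Poly_Mapping.lookup q r when m = l + r) when P m)" for l
  proof (cases "P l")
    case True
    then have "(Poly_Mapping.lookup (?res q) r when m = l + r)
        = ((Poly_Mapping.lookup q r when m = l + r) when P m)" for r
      by (auto simp: lookup_restrict_monomials P_add when_def)
    with True show ?thesis
      by (simp add: lookup_restrict_monomials Sum_any_when_independent mult_when)
  next
    case False
    then have "((Poly_Mapping.lookup q r when m = l + r) when P m) = 0" for r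
      by (auto simp: P_add when_def)
    then have "((\<Sum>r. Poly_Mapping.lookup q r when m = l + r) when P m) = 0"
      by (simp add: Sum_any_when_independent[symmetric])
    with False show ?thesis
      by (simp add: lookup_restrict_monomials mult_when[symmetric])
  qed
  show "Poly_Mapping.lookup (?res (p * q)) m = Poly_Mapping.lookup (?res p * ?res q) m"
    unfolding lookup_mult summand by (simp add: Sum_any_when_independent lookup_restrict_monomials lookup_mult)
qed

lemma restrict_monomials_comm_ring_hom:
  assumes "P 0" and "\<And>a b. P (a + b) \<longleftrightarrow> P a \<and> P b"
  shows "comm_ring_hom (restrict_monomials P :: ('a::comm_monoid_add \<Rightarrow>\<^sub>0 'b::comm_ring_1) \<Rightarrow> _)"
proof
  show "restrict_monomials P (p * q) = restrict_monomials P p * restrict_monomials P q" for p q :: "'a \<Rightarrow>\<^sub>0 'b"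
    using assms(2) by (rule restrict_monomials_mult)
  show "restrict_monomials P (p + q) = restrict_monomials P p + restrict_monomials P q" for p q :: "'a \<Rightarrow>\<^sub>0 'b"
    by (rule poly_mapping_eqI) (simp add: lookup_restrict_monomials lookup_add when_add_distrib)
  show "restrict_monomials P 1 = (1 :: 'a \<Rightarrow>\<^sub>0 'b)"
    by (rule poly_mapping_eqI) (simp add: lookup_restrict_monomials lookup_one when_def assms(1))
  show "restrict_monomials P 0 = (0 :: 'a \<Rightarrow>\<^sub>0 'b)"
    by (rule poly_mapping_eqI) (simp add: lookup_restrict_monomials)
qed

lemma sorted_list_of_set_insert_index:
  fixes R :: "'a::linorder set"
  assumes "finite R" and "x \<notin> R"
  obtains p where "p \<le> card R" and "sorted_list_of_set (insert x R) ! p = x"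
    and "\<And>a. a < card R \<Longrightarrow> sorted_list_of_set R ! a = sorted_list_of_set (insert x R) ! insert_index p a"
proof -
  define xs where "xs = sorted_list_of_set (insert x R)"
  have "x \<in> set xs" using assms(1) unfolding xs_def by (simp del: sorted_list_of_set_insert_remove)
  then obtain p where p: "p < length xs" "xs ! p = x" by (auto simp: in_set_conv_nth)
  have "distinct (take p xs @ x # drop (Suc p) xs)"
    using id_take_nth_drop[OF p(1)] p(2) unfolding xs_def by (metis sorted_list_of_set.distinct_sorted_key_list_of_set)
  then have "x \<notin> set (take p xs)" by simp
  have "sorted_list_of_set R = remove1 x xs"
    using assms unfolding xs_def by (simp add: sorted_list_of_set_insert)
  also have "\<dots> = take p xs @ drop (Suc p) xs"
    using p \<open>x \<notin> set (take p xs)\<close>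
    by (subst id_take_nth_drop[OF p(1)]) (simp add: remove1_append)
  finally have R_list: "sorted_list_of_set R = take p xs @ drop (Suc p) xs" .
  have "p \<le> card R" using p assms unfolding xs_def by simp
  moreover have "sorted_list_of_set R ! a = xs ! insert_index p a" if "a < card R" for a
    using that p unfolding R_list by (auto simp: nth_append insert_index_def min_def)
  ultimately show thesis using that p(2) unfolding xs_def by blast
qed

lemma det_eq_entry_times_cofactor:
  fixes A :: "'a::comm_ring_1 mat"
  assumes "A \<in> carrier_mat n n" and "i < n" and "j < n"
    and "\<And>b. b < n \<Longrightarrow> b \<noteq> j \<Longrightarrow> A $$ (i, b) = 0"
  shows "det A = A $$ (i, j) * cofactor A i j"
proof -
  have "det A = (\<Sum>b<n. A $$ (i, b) * cofactor A i b)"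
    using assms(1,2) by (rule laplace_expansion_row)
  also have "\<dots> = A $$ (i, j) * cofactor A i j"
    using assms(3,4) by (subst sum.remove[of _ j]) auto
  finally show ?thesis .
qed

text \<open>The substitution \<open>y\<^sub>k\<^sub>c := 0\<close> for \<open>c \<noteq> k\<close>, realised by discarding every monomial
  that contains one of these variables.\<close>
definition kill_row :: "nat \<Rightarrow> cpoly \<Rightarrow> cpoly" where
  "kill_row k = restrict_monomials (\<lambda>mon. \<forall>c. c \<noteq> k \<longrightarrow> Poly_Mapping.lookup mon (k, c) = 0)"

lemma kill_row_comm_ring_hom: "comm_ring_hom (kill_row k)"
  unfolding kill_row_def by (rule restrict_monomials_comm_ring_hom) (auto simp: lookup_add)

interpretation kill_row: comm_ring_hom "kill_row k"
  by (rule kill_row_comm_ring_hom)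

interpretation const_poly: comm_ring_hom const_poly
  by unfold_locales (simp_all add: const_poly_def mult_single single_add)

lemma kill_row_yvar: "kill_row k (yvar i j) = (if i = k \<and> j \<noteq> k then 0 else yvar i j)"
  by (rule poly_mapping_eqI)
     (auto simp: kill_row_def lookup_restrict_monomials yvar_def lookup_single when_def split: if_splits)

lemma kill_row_Yent: "kill_row k (Yent i j) = (if i = k \<and> j \<noteq> k then 0 else Yent i j)"
  by (simp add: Yent_def kill_row_yvar)

lemma kill_row_const_poly: "kill_row k (const_poly c) = const_poly c"
  by (rule poly_mapping_eqI)
     (auto simp: kill_row_def lookup_restrict_monomials const_poly_def lookup_single when_def)

lemma yvar_nonzero: "yvar i j \<noteq> 0"
  by (metis yvar_def lookup_single_eq lookup_zero zero_neq_one)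

lemma minor_det_self:
  assumes "finite S"
  shows "minor_det S S = (\<Prod>s\<in>S. yvar s s)"
proof -
  let ?rs = "sorted_list_of_set S"
  let ?M = "mat (length ?rs) (length ?rs) (\<lambda>(a, b). Yent (?rs ! a) (?rs ! b))"
  have "upper_triangular ?M"
    unfolding upper_triangular_def
  proof (intro allI impI)
    fix a b assume "a < dim_row ?M" "b < a"
    then have "?rs ! b < ?rs ! a" by (simp add: sorted_wrt_nth_less)
    with \<open>a < dim_row ?M\<close> \<open>b < a\<close> show "?M $$ (a, b) = 0" by (simp add: Yent_def)
  qed
  then have "det ?M = prod_list (diag_mat ?M)" by (rule det_upper_triangular) auto
  also have "diag_mat ?M = map (\<lambda>s. yvar s s) ?rs"
    unfolding diag_mat_def by (rule nth_equalityI) (auto simp: Yent_def)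
  also have "prod_list \<dots> = (\<Prod>s\<in>S. yvar s s)"
    using assms by (simp add: prod.distinct_set_conv_list[symmetric])
  finally show ?thesis by (simp add: minor_det_def Let_def)
qed

lemma minor_det_self_nonzero: "finite S \<Longrightarrow> minor_det S S \<noteq> 0"
  by (simp add: minor_det_self yvar_nonzero)

lemma kill_row_minor_det_self: "finite S \<Longrightarrow> kill_row k (minor_det S S) = minor_det S S"
  by (simp add: minor_det_self kill_row.hom_prod kill_row_yvar)

lemma kill_row_minor_det_avoiding:
  assumes "finite R" and "k \<notin> R"
  shows "kill_row k (minor_det R S) = minor_det R S"
proof -
  let ?rs = "sorted_list_of_set R" and ?cs = "sorted_list_of_set S"
  let ?M = "mat (length ?rs) (length ?rs) (\<lambda>(a, b). Yent (?rs ! a) (?cs ! b))"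
  have "map_mat (kill_row k) ?M = ?M"
  proof (rule eq_matI)
    fix a b assume ab: "a < dim_row ?M" "b < dim_col ?M"
    then have "?rs ! a \<in> R"
      using assms(1) by (metis nth_mem set_sorted_list_of_set length_sorted_list_of_set dim_row_mat(1))
    with assms(2) ab show "map_mat (kill_row k) ?M $$ (a, b) = ?M $$ (a, b)"
      by (auto simp: kill_row_Yent)
  qed auto
  then have "kill_row k (det ?M) = det ?M" by (metis kill_row.hom_det)
  then show ?thesis by (auto simp: minor_det_def Let_def)
qed

lemma kill_row_minor_det_insert:
  assumes R: "finite R" and S: "finite S" and kR: "k \<notin> R" and kS: "k \<notin> S"
    and card: "card R = card S"
  shows "\<exists>s. kill_row k (minor_det (insert k R) (insert k S)) = (-1) ^ s * yvar k k * minor_det R S"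
proof -
  define N where "N = card R"
  define rs where "rs = sorted_list_of_set (insert k R)"
  define cs where "cs = sorted_list_of_set (insert k S)"
  define rs' where "rs' = sorted_list_of_set R"
  define cs' where "cs' = sorted_list_of_set S"
  obtain p where p: "p \<le> N" "rs ! p = k" "\<And>a. a < N \<Longrightarrow> rs' ! a = rs ! insert_index p a"
    using sorted_list_of_set_insert_index[OF R kR] unfolding N_def rs_def rs'_def by metis
  obtain q where q: "q \<le> N" "cs ! q = k" "\<And>b. b < N \<Longrightarrow> cs' ! b = cs ! insert_index q b"
    using sorted_list_of_set_insert_index[OF S kS] card unfolding N_def cs_def cs'_def by metis
  have len: "length rs = Suc N" "length cs = Suc N" "length rs' = N" "length cs' = N"
    using R S kR kS card unfolding N_def rs_def cs_def rs'_def cs'_def by simp_all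
  define M where "M = mat (Suc N) (Suc N) (\<lambda>(a, b). Yent (rs ! a) (cs ! b))"
  define M' where "M' = mat N N (\<lambda>(a, b). Yent (rs' ! a) (cs' ! b))"
  define B where "B = map_mat (kill_row k) M"
  have B_dim: "B \<in> carrier_mat (Suc N) (Suc N)" unfolding B_def M_def by simp
  have B_row: "B $$ (p, b) = 0" if "b < Suc N" "b \<noteq> q" for b
  proof -
    have "cs ! b \<noteq> k"
      using that q len unfolding cs_def by (metis distinct_sorted_list_of_set le_imp_less_Suc nth_eq_iff_index_eq)
    with that p show ?thesis unfolding B_def M_def by (simp add: kill_row_Yent)
  qed
  have B_pivot: "B $$ (p, q) = yvar k k"
    using p q unfolding B_def M_def by (simp add: Yent_def kill_row_yvar)
  have B_minor: "mat_delete B p q = M'"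
  proof (rule eq_matI)
    fix a b assume "a < dim_row M'" "b < dim_col M'"
    then have ab: "a < N" "b < N" unfolding M'_def by simp_all
    then have "rs' ! a \<in> R"
      using R len(3) unfolding rs'_def by (metis nth_mem set_sorted_list_of_set)
    then have "rs ! insert_index p a \<noteq> k" using kR p(3)[OF ab(1)] by auto
    then show "mat_delete B p q $$ (a, b) = M' $$ (a, b)"
      using ab p(3) q(3) unfolding B_def M_def M'_def mat_delete_def insert_index_def
      by (simp add: kill_row_Yent)
  qed (simp_all add: B_def M_def M'_def)
  have "kill_row k (det M) = det B" unfolding B_def by simp
  also have "\<dots> = B $$ (p, q) * cofactor B p q"
    by (rule det_eq_entry_times_cofactor[OF B_dim]) (use p q B_row in auto)
  also have "\<dots> = (-1) ^ (p + q) * yvar k k * det M'"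
    by (simp add: B_pivot cofactor_def B_minor)
  finally show ?thesis
    using len card unfolding minor_det_def Let_def M_def M'_def rs_def cs_def rs'_def cs'_def
    by auto
qed

lemma finite_col: "finite D \<Longrightarrow> finite (col D j)"
  by (rule finite_subset[of _ "fst ` D"]) (force simp: col_def)+

lemma kill_row_aug_column:
  assumes D: "finite D" and C: "finite (col C j)" and "j \<noteq> l" and kC: "k \<notin> col C j"
    and card: "card (col C j) = card (col (hat k l D) j)"
  shows "\<exists>s. kill_row k (minor_det (col (aug k l D C) j) (col D j))
    = (-1) ^ s * (if (k, j) \<in> D then yvar k k else 1) * minor_det (col C j) (col (hat k l D) j)"
proof (cases "(k, j) \<in> D")
  case True
  with \<open>j \<noteq> l\<close> have "col (aug k l D C) j = insert k (col C j)" "col D j = insert k (col (hat k l D) j)"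
    by (auto simp: col_def aug_def hat_def)
  moreover have "k \<notin> col (hat k l D) j" "finite (col (hat k l D) j)"
    using D by (auto simp: col_def hat_def intro: finite_subset[OF _ finite_col])
  ultimately show ?thesis
    using kill_row_minor_det_insert[OF C _ kC _ card] True by simp
next
  case False
  with \<open>j \<noteq> l\<close> have "col (aug k l D C) j = col C j" "col D j = col (hat k l D) j"
    by (auto simp: col_def aug_def hat_def)
  with False show ?thesis
    using kill_row_minor_det_avoiding[OF C kC] by (intro exI[of _ 0]) simp
qed

lemma kill_row_aug_prod:
  assumes J: "finite J" "l \<in> J" and D: "finite D" and C: "finite C"
    and C_sub: "C \<subseteq> (UNIV - {k}) \<times> (UNIV - {l})"
    and card: "\<And>j. j \<in> J - {l} \<Longrightarrow> card (col C j) = card (col (hat k l D) j)"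
  shows "\<exists>s. kill_row k (\<Prod>j\<in>J. minor_det (col (aug k l D C) j) (col D j))
    = (-1) ^ s * (minor_det (col D l) (col D l) * (\<Prod>j\<in>J - {l}. if (k, j) \<in> D then yvar k k else 1))
      * (\<Prod>j\<in>J - {l}. minor_det (col C j) (col (hat k l D) j))"
proof -
  have "\<exists>s. kill_row k (minor_det (col (aug k l D C) j) (col D j))
      = (-1) ^ s * (if (k, j) \<in> D then yvar k k else 1) * minor_det (col C j) (col (hat k l D) j)"
    if "j \<in> J - {l}" for j
    using that C_sub by (intro kill_row_aug_column D finite_col C card) (auto simp: col_def)
  then obtain s where s: "\<And>j. j \<in> J - {l} \<Longrightarrow> kill_row k (minor_det (col (aug k l D C) j) (col D j))
      = (-1) ^ s j * (if (k, j) \<in> D then yvar k k else 1) * minor_det (col C j) (col (hat k l D) j)"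
    by metis
  have "col (aug k l D C) l = col D l"
    using C_sub by (auto simp: col_def aug_def)
  then have "kill_row k (minor_det (col (aug k l D C) l) (col D l)) = minor_det (col D l) (col D l)"
    by (simp add: kill_row_minor_det_self finite_col D)
  moreover have "kill_row k (\<Prod>j\<in>J - {l}. minor_det (col (aug k l D C) j) (col D j))
      = (-1) ^ (\<Sum>j\<in>J - {l}. s j) * (\<Prod>j\<in>J - {l}. if (k, j) \<in> D then yvar k k else 1)
        * (\<Prod>j\<in>J - {l}. minor_det (col C j) (col (hat k l D) j))"
    by (simp add: kill_row.hom_prod s prod.distrib power_sum)
  ultimately show ?thesis
    using J by (intro exI[of _ "\<Sum>j\<in>J - {l}. s j"]) (simp add: prod.remove kill_row.hom_mult mult_ac)
qed

lemma lin_dep_hom: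
  assumes "comm_ring_hom h" and "\<And>c. h (const_poly c) = const_poly c" and "lin_dep m P"
  shows "lin_dep m (\<lambda>i. h (P i))"
proof -
  interpret h: comm_ring_hom h by fact
  from \<open>lin_dep m P\<close> obtain c where c: "\<exists>i\<in>{1..m}. c i \<noteq> 0"
    and dep: "(\<Sum>i = 1..m. const_poly (c i) * P i) = 0"
    unfolding lin_dep_def by blast
  have "(\<Sum>i = 1..m. const_poly (c i) * h (P i)) = h (\<Sum>i = 1..m. const_poly (c i) * P i)"
    by (simp add: h.hom_sum h.hom_mult assms(2))
  with dep have "(\<Sum>i = 1..m. const_poly (c i) * h (P i)) = 0" by simp
  with c show ?thesis unfolding lin_dep_def by (intro exI[of _ c] conjI)
qed

lemma lin_dep_cancel_factor:
  assumes "lin_dep m P" and "W \<noteq> 0"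
    and "\<And>i. i \<in> {1..m} \<Longrightarrow> \<exists>e. e \<noteq> 0 \<and> P i = const_poly e * W * Q i"
  shows "lin_dep m Q"
proof -
  obtain e where e: "\<And>i. i \<in> {1..m} \<Longrightarrow> e i \<noteq> 0 \<and> P i = const_poly (e i) * W * Q i"
    using assms(3) by metis
  from \<open>lin_dep m P\<close> obtain c where c: "\<exists>i\<in>{1..m}. c i \<noteq> 0"
    and dep: "(\<Sum>i = 1..m. const_poly (c i) * P i) = 0"
    unfolding lin_dep_def by blast
  have "(\<Sum>i = 1..m. const_poly (c i) * P i) = W * (\<Sum>i = 1..m. const_poly (c i * e i) * Q i)"
    unfolding sum_distrib_left by (rule sum.cong) (simp_all add: e const_poly.hom_mult mult_ac)
  with dep \<open>W \<noteq> 0\<close> have "(\<Sum>i = 1..m. const_poly (c i * e i) * Q i) = 0"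
    by simp
  moreover from c e have "\<exists>i\<in>{1..m}. c i * e i \<noteq> 0" by auto
  ultimately show ?thesis unfolding lin_dep_def by (intro exI[of _ "\<lambda>i. c i * e i"] conjI)
qed

theorem lemma5p7:
  fixes n k l m :: nat and D :: "(nat \<times> nat) set"
    and Ch :: "nat \<Rightarrow> (nat \<times> nat) set"
  assumes "is_diagram n D"
    and "k \<in> {1..n}" and "l \<in> {1..n}"
    and "\<And>i. i \<in> {1..m} \<Longrightarrow> Ch i \<subseteq> ({1..n} - {k}) \<times> ({1..n} - {l})"
    and "\<And>i. i \<in> {1..m} \<Longrightarrow> diag_le n (Ch i) (hat k l D)"
    and "lin_dep m (\<lambda>i. \<Prod>j \<in> {1..n}. minor_det (col (aug k l D (Ch i)) j) (col D j))"
  shows "lin_dep m (\<lambda>i. \<Prod>j \<in> {1..n} - {l}. minor_det (col (Ch i) j) (col (hat k l D) j))"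
proof -
  let ?F = "\<lambda>i. \<Prod>j \<in> {1..n}. minor_det (col (aug k l D (Ch i)) j) (col D j)"
  let ?G = "\<lambda>i. \<Prod>j \<in> {1..n} - {l}. minor_det (col (Ch i) j) (col (hat k l D) j)"
  define W where "W = minor_det (col D l) (col D l) * (\<Prod>j\<in>{1..n} - {l}. if (k, j) \<in> D then yvar k k else 1)"
  have D: "finite D"
    using assms(1) unfolding is_diagram_def by (rule finite_subset) simp
  have "W \<noteq> 0"
    unfolding W_def by (simp add: minor_det_self_nonzero finite_col D yvar_nonzero)
  with lin_dep_hom[OF kill_row_comm_ring_hom[of k] kill_row_const_poly assms(6)] show ?thesis
  proof (rule lin_dep_cancel_factor)
    fix i assume i: "i \<in> {1..m}"
    have C: "finite (Ch i)" "Ch i \<subseteq> (UNIV - {k}) \<times> (UNIV - {l})"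
      using assms(4)[OF i] by (auto intro: finite_subset)
    have "card (col (Ch i) j) = card (col (hat k l D) j)" if "j \<in> {1..n} - {l}" for j
      using assms(5)[OF i] that unfolding diag_le_def set_le_def by simp
    then obtain s where "kill_row k (?F i) = (-1) ^ s * W * ?G i"
      using kill_row_aug_prod[OF _ assms(3) D C] unfolding W_def by auto
    then show "\<exists>e. e \<noteq> 0 \<and> kill_row k (?F i) = const_poly e * W * ?G i"
      by (intro exI[of _ "(-1) ^ s"]) (simp add: const_poly.hom_power const_poly.hom_uminus)
  qed
qed

end
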